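(* Let $k$ be a bounded positive-semidefinite kernel on a set $\mathcal X$, $f\sim\mathcal{GP}(0,k)$, and let $(x_t)_{t\ge1}$ be $\mathcal X$-valued random variables adapted to a filtration $(\mathcal F_t)_{t\ge0}$. Fix $x\in\mathcal X$ and suppose there exist $T_*\in\mathbb N$ and positive numbers $(B_T)_{T\in\mathbb N}$ such that $\sum_{t=1}^T\mathbb P(x_t=x\mid\mathcal F_{t-1})\ge B_T>0$ for all $T\ge T_*$. Let $\sigma_t^2$ be the GP posterior variance given (noisy, noise variance $\sigma_\epsilon^2>0$) observations at $x_1,\dots,x_t$. Then with probability $1$, $\sigma_t^2(x)\in\mathcal O(B_t^{-1})$, i.e. $\limsup_{t\to\infty}B_t\sigma_t^2(x)<\infty$. Moreover, if $B_t\to\infty$, then (a.s.) $\limsup_{t\to\infty}B_t\sigma_t^2(x)\le\sigma_\epsilon^2$.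
   Context: The GP posterior variance with prior covariance $k$, noise variance $\sigma_\epsilon^2$ and observation points $x_1,\dots,x_t$ is $\sigma_t^2(x)=k(x,x)-\mathbf k_t(x)^\top(\mathbf K_t+\sigma_\epsilon^2I)^{-1}\mathbf k_t(x)$, with $\mathbf k_t(x)=[k(x,x_i)]_{i=1}^t$, $\mathbf K_t=[k(x_i,x_j)]_{i,j=1}^t$. Observations are $y_i=f(x_i)+\epsilon_i$ with i.i.d. $\epsilon_i\sim\mathcal N(0,\sigma_\epsilon^2)$. *)

theory Defs
  imports "HOL-Probability.Probability" "Jordan_Normal_Form.Gauss_Jordan_Elimination"
begin

definition psd_kernel :: "('x \<Rightarrow> 'x \<Rightarrow> real) \<Rightarrow> bool" where
  "psd_kernel k \<longleftrightarrow> (\<forall>x y. k x y = k y x) \<and>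
     (\<forall>(n::nat) (xs::nat \<Rightarrow> 'x) (c::nat \<Rightarrow> real).
        (\<Sum>i<n. \<Sum>j<n. c i * c j * k (xs i) (xs j)) \<ge> 0)"

definition bounded_kernel :: "('x \<Rightarrow> 'x \<Rightarrow> real) \<Rightarrow> bool" where
  "bounded_kernel k \<longleftrightarrow> (\<exists>K. \<forall>x y. \<bar>k x y\<bar> \<le> K)"

definition gram_mat :: "('x \<Rightarrow> 'x \<Rightarrow> real) \<Rightarrow> (nat \<Rightarrow> 'x) \<Rightarrow> nat \<Rightarrow> real mat" where
  "gram_mat k xs t = mat t t (\<lambda>(i, j). k (xs i) (xs j))"

definition kern_vec :: "('x \<Rightarrow> 'x \<Rightarrow> real) \<Rightarrow> (nat \<Rightarrow> 'x) \<Rightarrow> nat \<Rightarrow> 'x \<Rightarrow> real vec" where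
  "kern_vec k xs t x = vec t (\<lambda>i. k x (xs i))"

definition post_var :: "('x \<Rightarrow> 'x \<Rightarrow> real) \<Rightarrow> real \<Rightarrow> (nat \<Rightarrow> 'x) \<Rightarrow> nat \<Rightarrow> 'x \<Rightarrow> real" where
  "post_var k s2 xs t x =
     k x x - scalar_prod (kern_vec k xs t x)
       (the (mat_inverse (gram_mat k xs t + s2 \<cdot>\<^sub>m 1\<^sub>m t)) *\<^sub>v kern_vec k xs t x)"

end

theory Submission
  imports Defs "Jordan_Normal_Form.Determinant"
begin

text \<open>The posterior variance sigma_t^2(x) is the smallest mean squared error of a linear predictor
  of f(x) from the observations. Predicting by 0 gives sigma_t^2(x) <= k(x,x), and averaging the n_t
  observations taken at x itself gives sigma_t^2(x) <= sigma_eps^2 / n_t. It remains to compare the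
  visit count n_t with its compensator A_t = sum_{s <= t} P(x_s = x | F_{s-1}), which is at least B_t.
  For 0 < c < 1 the products prod_{s <= t} (1 - c [x_s = x]) exp (c P(x_s = x | F_{s-1})) form a
  nonnegative supermartingale, hence stay bounded almost surely by Ville's inequality; taking
  logarithms, n_t >= (1 - c) A_t - K. So if A_t stays bounded, so does B_t sigma_t^2(x) <= A_t k(x,x);
  if A_t tends to infinity, then eventually
  B_t sigma_t^2(x) <= sigma_eps^2 A_t / n_t <= sigma_eps^2 / (1 - 2c), for every c.\<close>

lemma psd_kernel_sym: "psd_kernel k \<Longrightarrow> k a b = k b a"
  unfolding psd_kernel_def by blast

lemma psd_kernel_quad_form_nonneg:
  fixes n :: nat and c :: "nat \<Rightarrow> real" and xs :: "nat \<Rightarrow> 'x"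
  shows "psd_kernel k \<Longrightarrow> 0 \<le> (\<Sum>i<n. \<Sum>j<n. c i * c j * k (xs i) (xs j))"
  unfolding psd_kernel_def by blast

lemma psd_kernel_diag_nonneg: "psd_kernel k \<Longrightarrow> 0 \<le> k x x"
  using psd_kernel_quad_form_nonneg[where n = 1 and c = "\<lambda>_. 1" and xs = "\<lambda>_. x"] by simp

lemma quad_form_add_diag:
  fixes g :: "nat \<Rightarrow> nat \<Rightarrow> real"
  shows "(\<Sum>i<t. \<Sum>j<t. w i * w j * (g i j + (if i = j then s else 0)))
       = (\<Sum>i<t. \<Sum>j<t. w i * w j * g i j) + s * (\<Sum>i<t. (w i)\<^sup>2)"
proof -
  have "(\<Sum>j<t. w i * w j * (if i = j then s else 0)) = s * (w i)\<^sup>2" if "i < t" for i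
  proof -
    have "(\<Sum>j<t. w i * w j * (if i = j then s else 0)) = (\<Sum>j<t. if i = j then s * (w i)\<^sup>2 else 0)"
      by (intro sum.cong) (auto simp: power2_eq_square)
    then show ?thesis using that by simp
  qed
  then show ?thesis by (simp add: distrib_left sum.distrib sum_distrib_left)
qed

lemma psd_solution_lower_bound:
  fixes g :: "nat \<Rightarrow> nat \<Rightarrow> real" and u b c :: "nat \<Rightarrow> real"
  assumes sym: "\<And>i j. g i j = g j i"
    and psd: "\<And>w. 0 \<le> (\<Sum>i<t. \<Sum>j<t. w i * w j * g i j)"
    and sol: "\<And>i. i < t \<Longrightarrow> (\<Sum>j<t. g i j * u j) = b i"
  shows "2 * (\<Sum>i<t. c i * b i) - (\<Sum>i<t. \<Sum>j<t. c i * c j * g i j) \<le> (\<Sum>i<t. b i * u i)"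
proof -
  have pair: "(\<Sum>i<t. \<Sum>j<t. v i * u j * g i j) = (\<Sum>i<t. v i * b i)" for v
  proof -
    have "(\<Sum>i<t. \<Sum>j<t. v i * u j * g i j) = (\<Sum>i<t. v i * (\<Sum>j<t. g i j * u j))"
      by (simp add: sum_distrib_left mult_ac)
    also have "\<dots> = (\<Sum>i<t. v i * b i)" using sol by simp
    finally show ?thesis .
  qed
  have swap: "(\<Sum>i<t. \<Sum>j<t. u i * c j * g i j) = (\<Sum>i<t. \<Sum>j<t. c i * u j * g i j)"
    by (subst sum.swap) (simp add: sym mult_ac)
  have "0 \<le> (\<Sum>i<t. \<Sum>j<t. (u i - c i) * (u j - c j) * g i j)" by (rule psd)
  also have "\<dots> = (\<Sum>i<t. \<Sum>j<t. u i * u j * g i j) - (\<Sum>i<t. \<Sum>j<t. u i * c j * g i j)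
      - (\<Sum>i<t. \<Sum>j<t. c i * u j * g i j) + (\<Sum>i<t. \<Sum>j<t. c i * c j * g i j)"
    by (simp add: algebra_simps sum.distrib sum_subtractf)
  finally show ?thesis unfolding swap pair by (simp add: mult.commute)
qed

lemma noisy_gram_carrier: "gram_mat k xs t + s \<cdot>\<^sub>m 1\<^sub>m t \<in> carrier_mat t t"
  unfolding gram_mat_def by simp

lemma noisy_gram_mult_vec:
  assumes "v \<in> carrier_vec t" "i < t"
  shows "((gram_mat k xs t + s \<cdot>\<^sub>m 1\<^sub>m t) *\<^sub>v v) $ i
       = (\<Sum>j<t. (k (xs i) (xs j) + (if i = j then s else 0)) * v $ j)"
  using assms by (auto simp: gram_mat_def scalar_prod_def atLeast0LessThan intro!: sum.cong)

lemma noisy_gram_quad_form: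
  assumes "v \<in> carrier_vec t"
  shows "v \<bullet> ((gram_mat k xs t + s \<cdot>\<^sub>m 1\<^sub>m t) *\<^sub>v v)
       = (\<Sum>i<t. \<Sum>j<t. v $ i * v $ j * k (xs i) (xs j)) + s * (\<Sum>i<t. (v $ i)\<^sup>2)"
proof -
  have "v \<bullet> ((gram_mat k xs t + s \<cdot>\<^sub>m 1\<^sub>m t) *\<^sub>v v)
      = (\<Sum>i<t. v $ i * ((gram_mat k xs t + s \<cdot>\<^sub>m 1\<^sub>m t) *\<^sub>v v) $ i)"
    using assms noisy_gram_carrier by (simp add: scalar_prod_def atLeast0LessThan)
  also have "\<dots> = (\<Sum>i<t. \<Sum>j<t. v $ i * v $ j * (k (xs i) (xs j) + (if i = j then s else 0)))"
  proof (intro sum.cong refl)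
    fix i assume "i \<in> {..<t}"
    then show "v $ i * ((gram_mat k xs t + s \<cdot>\<^sub>m 1\<^sub>m t) *\<^sub>v v) $ i
        = (\<Sum>j<t. v $ i * v $ j * (k (xs i) (xs j) + (if i = j then s else 0)))"
      by (subst noisy_gram_mult_vec[OF assms]) (auto simp: sum_distrib_left mult_ac)
  qed
  finally show ?thesis by (simp only: quad_form_add_diag)
qed

lemma det_noisy_gram_nonzero:
  assumes "psd_kernel k" "s > 0"
  shows "det (gram_mat k xs t + s \<cdot>\<^sub>m 1\<^sub>m t) \<noteq> 0"
proof
  assume "det (gram_mat k xs t + s \<cdot>\<^sub>m 1\<^sub>m t) = 0"
  then obtain v where v: "v \<in> carrier_vec t" "v \<noteq> 0\<^sub>v t"
    and null: "(gram_mat k xs t + s \<cdot>\<^sub>m 1\<^sub>m t) *\<^sub>v v = 0\<^sub>v t"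
    using det_0_iff_vec_prod_zero_field[OF noisy_gram_carrier] by blast
  have "s * (\<Sum>i<t. (v $ i)\<^sup>2) \<le> v \<bullet> ((gram_mat k xs t + s \<cdot>\<^sub>m 1\<^sub>m t) *\<^sub>v v)"
    unfolding noisy_gram_quad_form[OF v(1)]
    using psd_kernel_quad_form_nonneg[OF assms(1), where n = t and c = "\<lambda>i. v $ i" and xs = xs] by simp
  also have "\<dots> = 0" using null v(1) by simp
  finally have "(\<Sum>i<t. (v $ i)\<^sup>2) = 0"
    using \<open>s > 0\<close> by (simp add: mult_le_0_iff sum_nonneg order.antisym)
  then have "v = 0\<^sub>v t" using v(1) by (intro eq_vecI) (auto simp: sum_nonneg_eq_0_iff)
  with v(2) show False ..
qed

lemma mat_inverse_noisy_gram:
  assumes "psd_kernel k" "s > 0"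
  obtains G' where "mat_inverse (gram_mat k xs t + s \<cdot>\<^sub>m 1\<^sub>m t) = Some G'"
    and "(gram_mat k xs t + s \<cdot>\<^sub>m 1\<^sub>m t) * G' = 1\<^sub>m t" and "G' \<in> carrier_mat t t"
proof (cases "mat_inverse (gram_mat k xs t + s \<cdot>\<^sub>m 1\<^sub>m t)")
  case None
  then show ?thesis
    using mat_inverse(1)[OF noisy_gram_carrier, where b = "()"]
      det_non_zero_imp_unit[OF noisy_gram_carrier det_noisy_gram_nonzero[OF assms], where b = "()"]
    by blast
next
  case (Some G')
  then show ?thesis using that mat_inverse(2)[OF noisy_gram_carrier Some] by blast
qed

lemma post_var_le_linear_predictor:
  assumes psd: "psd_kernel k" and s: "s > 0"
  shows "post_var k s xs t x \<le> k x x - 2 * (\<Sum>i<t. c i * k x (xs i))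
     + (\<Sum>i<t. \<Sum>j<t. c i * c j * k (xs i) (xs j)) + s * (\<Sum>i<t. (c i)\<^sup>2)"
proof -
  define G where "G = gram_mat k xs t + s \<cdot>\<^sub>m 1\<^sub>m t"
  define g where "g i j = k (xs i) (xs j) + (if i = j then s else 0)" for i j
  define kv where "kv = kern_vec k xs t x"
  obtain G' where G': "mat_inverse G = Some G'" "G * G' = 1\<^sub>m t" "G' \<in> carrier_mat t t"
    using mat_inverse_noisy_gram[OF psd s] unfolding G_def by blast
  have G: "G \<in> carrier_mat t t" unfolding G_def by (rule noisy_gram_carrier)
  have kv: "kv \<in> carrier_vec t" unfolding kv_def kern_vec_def by simp
  define u where "u = G' *\<^sub>v kv"
  have u: "u \<in> carrier_vec t" unfolding u_def using G'(3) kv by simp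
  have "G *\<^sub>v u = kv"
    unfolding u_def using G G' kv by (simp add: assoc_mult_mat_vec[symmetric])
  then have sol: "(\<Sum>j<t. g i j * u $ j) = k x (xs i)" if "i < t" for i
  proof -
    have "(\<Sum>j<t. g i j * u $ j) = (G *\<^sub>v u) $ i"
      unfolding G_def g_def by (rule noisy_gram_mult_vec[OF u that, symmetric])
    then show ?thesis using \<open>G *\<^sub>v u = kv\<close> that by (simp add: kv_def kern_vec_def)
  qed
  have "post_var k s xs t x = k x x - kv \<bullet> u"
    unfolding post_var_def G_def[symmetric] kv_def[symmetric] G'(1) u_def by simp
  also have "kv \<bullet> u = (\<Sum>i<t. k x (xs i) * u $ i)"
    using u by (simp add: scalar_prod_def atLeast0LessThan kv_def kern_vec_def)
  finally have post_var_eq: "post_var k s xs t x = k x x - (\<Sum>i<t. k x (xs i) * u $ i)" .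
  have g_psd: "0 \<le> (\<Sum>i<t. \<Sum>j<t. w i * w j * g i j)" for w
    unfolding g_def quad_form_add_diag
    using psd_kernel_quad_form_nonneg[OF psd, where n = t and c = w and xs = xs] s by (simp add: sum_nonneg)
  have "g i j = g j i" for i j unfolding g_def by (simp add: psd_kernel_sym[OF psd])
  from psd_solution_lower_bound[OF this g_psd sol, of c] show ?thesis
    unfolding post_var_eq g_def quad_form_add_diag by simp
qed

corollary post_var_le_diag:
  "psd_kernel k \<Longrightarrow> s > 0 \<Longrightarrow> post_var k s xs t x \<le> k x x"
  using post_var_le_linear_predictor[where c = "\<lambda>_. 0"] by simp

lemma post_var_le_noise_div_visits:
  assumes psd: "psd_kernel k" and s: "s > 0"
    and n: "n = (\<Sum>i<t. of_bool (xs i = x))" and "n > 0"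
  shows "post_var k s xs t x \<le> s / n"
proof -
  define c where "c i = of_bool (xs i = x) / n" for i
  have count: "(\<Sum>i<t. of_bool (xs i = x)) = n" using n by simp
  have "(\<Sum>i<t. c i * k x (xs i)) = k x x / n * (\<Sum>i<t. of_bool (xs i = x))"
    unfolding sum_distrib_left by (intro sum.cong) (auto simp: c_def)
  moreover have "(\<Sum>i<t. \<Sum>j<t. c i * c j * k (xs i) (xs j))
      = k x x / n\<^sup>2 * ((\<Sum>i<t. of_bool (xs i = x)) * (\<Sum>j<t. of_bool (xs j = x)))"
  proof -
    have "c i * c j * k (xs i) (xs j) = k x x / n\<^sup>2 * (of_bool (xs i = x) * of_bool (xs j = x))"
      for i j by (auto simp: c_def power2_eq_square)
    then have "(\<Sum>i<t. \<Sum>j<t. c i * c j * k (xs i) (xs j))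
        = k x x / n\<^sup>2 * (\<Sum>i<t. \<Sum>j<t. of_bool (xs i = x) * of_bool (xs j = x))"
      by (simp only: sum_distrib_left)
    then show ?thesis by (simp only: sum_product)
  qed
  moreover have "(\<Sum>i<t. (c i)\<^sup>2) = 1 / n\<^sup>2 * (\<Sum>i<t. of_bool (xs i = x))"
    unfolding sum_distrib_left by (intro sum.cong) (auto simp: c_def power2_eq_square)
  ultimately show ?thesis
    using post_var_le_linear_predictor[OF psd s, of xs t x c] \<open>n > 0\<close>
    unfolding count by (simp add: power2_eq_square)
qed

lemma eventually_mult_le_of_linear_lower_bound:
  fixes A N \<sigma> B :: "nat \<Rightarrow> real"
  assumes "incseq A" and unbounded: "\<not> bdd_above (range A)"
    and B_le_A: "\<And>t. T0 \<le> t \<Longrightarrow> B t \<le> A t" and B_pos: "\<And>t. 0 < B t"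
    and \<sigma>_le: "\<And>t. 0 < N t \<Longrightarrow> \<sigma> t \<le> s / N t" and "0 \<le> s"
    and \<delta>: "0 < \<delta>" "\<delta> < 1 / 2" and lower: "\<And>t. (1 - \<delta>) * A t - K \<le> N t"
  shows "eventually (\<lambda>t. B t * \<sigma> t \<le> s / (1 - 2 * \<delta>)) sequentially"
proof -
  obtain t0 where t0: "\<bar>K\<bar> / \<delta> < A t0" using unbounded by (auto simp: bdd_above_def not_le)
  show ?thesis
  proof (rule eventually_sequentiallyI[of "max t0 T0"])
    fix t assume t: "max t0 T0 \<le> t"
    have "\<delta> * A t0 \<le> \<delta> * A t"
      using \<open>incseq A\<close> t \<delta> by (intro mult_left_mono) (auto simp: incseq_def)
    moreover have "\<bar>K\<bar> < \<delta> * A t0" using t0 \<delta> by (simp add: pos_divide_less_eq mult.commute)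
    ultimately have "\<bar>K\<bar> < \<delta> * A t" by linarith
    then have N_ge: "(1 - 2 * \<delta>) * A t \<le> N t"
      using lower[of t] by (auto simp: algebra_simps)
    have "0 < \<delta> * A t" using \<open>\<bar>K\<bar> < \<delta> * A t\<close> by linarith
    then have A_pos: "0 < A t" using \<delta> by (simp add: zero_less_mult_iff)
    have "0 < (1 - 2 * \<delta>) * A t" using A_pos \<delta> by simp
    then have N_pos: "0 < N t" using N_ge by linarith
    have "B t * \<sigma> t \<le> B t * (s / N t)" using B_pos[of t] \<sigma>_le[OF N_pos] by (intro mult_left_mono) auto
    also have "\<dots> \<le> A t * (s / N t)"
      using B_le_A t N_pos \<open>0 \<le> s\<close> by (intro mult_right_mono) auto
    also have "\<dots> = s * (A t / N t)" by simp
    also have "\<dots> \<le> s * (1 / (1 - 2 * \<delta>))"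
    proof (intro mult_left_mono)
      have "A t \<le> N t / (1 - 2 * \<delta>)" using N_ge \<delta> by (simp add: pos_le_divide_eq mult.commute)
      then show "A t / N t \<le> 1 / (1 - 2 * \<delta>)" using N_pos by (simp add: divide_le_eq)
    qed (use \<open>0 \<le> s\<close> in simp)
    finally show "B t * \<sigma> t \<le> s / (1 - 2 * \<delta>)" by simp
  qed
qed

lemma limsup_mult_finite_of_linear_lower_bound:
  fixes A N \<sigma> B :: "nat \<Rightarrow> real"
  assumes "incseq A"
    and B_le_A: "\<And>t. T0 \<le> t \<Longrightarrow> B t \<le> A t" and B_pos: "\<And>t. 0 < B t"
    and \<sigma>_le_const: "\<And>t. \<sigma> t \<le> \<kappa>" and "0 \<le> \<kappa>"
    and \<sigma>_le: "\<And>t. 0 < N t \<Longrightarrow> \<sigma> t \<le> s / N t" and "0 \<le> s"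
    and \<delta>: "0 < \<delta>" "\<delta> < 1 / 2" and lower: "\<And>t. (1 - \<delta>) * A t - K \<le> N t"
  shows "limsup (\<lambda>t. ereal (B t * \<sigma> t)) < \<infinity>"
proof (cases "bdd_above (range A)")
  case True
  then obtain R where R: "\<And>t. A t \<le> R" by (auto simp: bdd_above_def)
  have "B t * \<sigma> t \<le> R * \<kappa>" if "T0 \<le> t" for t
  proof -
    have "B t * \<sigma> t \<le> B t * \<kappa>" using B_pos[of t] \<sigma>_le_const[of t] by (intro mult_left_mono) auto
    also have "\<dots> \<le> R * \<kappa>" using B_le_A[OF that] R[of t] \<open>0 \<le> \<kappa>\<close> by (intro mult_right_mono) auto
    finally show ?thesis .
  qed
  then have "limsup (\<lambda>t. ereal (B t * \<sigma> t)) \<le> ereal (R * \<kappa>)"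
    by (intro Limsup_bounded eventually_sequentiallyI[of T0]) simp
  then show ?thesis by (rule order.strict_trans1) simp
next
  case False
  from eventually_mult_le_of_linear_lower_bound[OF \<open>incseq A\<close> False B_le_A B_pos \<sigma>_le \<open>0 \<le> s\<close> \<delta> lower]
  have "eventually (\<lambda>t. ereal (B t * \<sigma> t) \<le> ereal (s / (1 - 2 * \<delta>))) sequentially" by simp
  then have "limsup (\<lambda>t. ereal (B t * \<sigma> t)) \<le> ereal (s / (1 - 2 * \<delta>))"
    by (rule Limsup_bounded)
  then show ?thesis by (rule order.strict_trans1) simp
qed

lemma limsup_mult_le_of_linear_lower_bounds:
  fixes A N \<sigma> B :: "nat \<Rightarrow> real"
  assumes "incseq A" and B_lim: "filterlim B at_top sequentially"
    and B_le_A: "\<And>t. T0 \<le> t \<Longrightarrow> B t \<le> A t" and B_pos: "\<And>t. 0 < B t"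
    and \<sigma>_le: "\<And>t. 0 < N t \<Longrightarrow> \<sigma> t \<le> s / N t" and "0 < s"
    and lower: "\<And>\<delta>. 0 < \<delta> \<Longrightarrow> \<exists>K. \<forall>t. (1 - \<delta>) * A t - K \<le> N t"
  shows "limsup (\<lambda>t. ereal (B t * \<sigma> t)) \<le> ereal s"
proof (rule ereal_le_epsilon2)
  have unbounded: "\<not> bdd_above (range A)"
  proof
    assume "bdd_above (range A)"
    then obtain R where R: "\<And>t. A t \<le> R" by (auto simp: bdd_above_def)
    have "eventually (\<lambda>t. R < B t \<and> T0 \<le> t) sequentially"
      using B_lim by (simp add: filterlim_at_top_dense eventually_conj eventually_ge_at_top)
    then obtain t where "R < B t" "T0 \<le> t" by (auto simp: eventually_sequentially)
    with B_le_A R show False by (meson not_le order.trans)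
  qed
  fix e :: real assume "0 < e"
  define \<delta> where "\<delta> = e / (2 * (s + e))"
  have \<delta>: "0 < \<delta>" "\<delta> < 1 / 2" using \<open>0 < e\<close> \<open>0 < s\<close> by (auto simp: \<delta>_def field_simps)
  have bound: "s / (1 - 2 * \<delta>) = s + e" using \<open>0 < e\<close> \<open>0 < s\<close> by (simp add: \<delta>_def field_simps)
  obtain K where "\<And>t. (1 - \<delta>) * A t - K \<le> N t" using lower \<delta>(1) by blast
  from eventually_mult_le_of_linear_lower_bound[OF \<open>incseq A\<close> unbounded B_le_A B_pos \<sigma>_le _ \<delta> this]
  have "eventually (\<lambda>t. ereal (B t * \<sigma> t) \<le> ereal s + ereal e) sequentially"
    using \<open>0 < s\<close> unfolding bound by simp
  then show "limsup (\<lambda>t. ereal (B t * \<sigma> t)) \<le> ereal s + ereal e" by (rule Limsup_bounded)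
qed

fun stopped_prod :: "real \<Rightarrow> (nat \<Rightarrow> 'a \<Rightarrow> real) \<Rightarrow> nat \<Rightarrow> 'a \<Rightarrow> real" where
  "stopped_prod C f 0 w = 1"
| "stopped_prod C f (Suc n) w =
     (if C \<le> stopped_prod C f n w then stopped_prod C f n w else stopped_prod C f n w * f n w)"

lemma stopped_prod_ge_mono: "C \<le> stopped_prod C f n w \<Longrightarrow> n \<le> m \<Longrightarrow> C \<le> stopped_prod C f m w"
  by (induction m) (auto simp: le_Suc_eq)

lemma stopped_prod_cases: "C \<le> stopped_prod C f n w \<or> stopped_prod C f n w = (\<Prod>i<n. f i w)"
  by (induction n) auto

lemma stopped_prod_ge_if_prod_ge:
  "C \<le> (\<Prod>i<n. f i w) \<Longrightarrow> C \<le> stopped_prod C f n w"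
  using stopped_prod_cases[of C f n w] by auto

lemma abs_mult_le_if_unit_interval:
  fixes a b K :: real
  assumes "\<bar>a\<bar> \<le> K" "0 \<le> b" "b \<le> 1"
  shows "\<bar>a * b\<bar> \<le> K"
proof -
  have "\<bar>a * b\<bar> = \<bar>a\<bar> * b" using assms(2) by (simp add: abs_mult)
  also have "\<dots> \<le> \<bar>a\<bar>" using assms(2,3) by (simp add: mult_left_le)
  finally show ?thesis using assms(1) by simp
qed

lemma minus_ln_one_minus_le:
  fixes c :: real
  shows "0 < c \<Longrightarrow> c < 1 \<Longrightarrow> - ln (1 - c) \<le> c / (1 - c)"
  using ln_le_minus_one[of "1 / (1 - c)"] by (simp add: ln_div field_simps)

locale visit_process = prob_space M for M :: "'w measure" +
  fixes F :: "nat \<Rightarrow> 'w measure" and SX :: "'x measure" and X :: "nat \<Rightarrow> 'w \<Rightarrow> 'x" and x :: 'x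
  assumes sigma_finite_F: "\<And>n. sigma_finite_subalgebra M (F n)"
    and sets_F_mono: "\<And>n m. n \<le> m \<Longrightarrow> sets (F n) \<subseteq> sets (F m)"
    and X_measurable: "\<And>t. t \<ge> 1 \<Longrightarrow> X t \<in> measurable (F t) SX"
    and singleton_sets: "{x} \<in> sets SX"
begin

text \<open>Indices are shifted by one: \<open>visit i\<close> records whether the point \<open>X (Suc i)\<close> is \<open>x\<close>;
  it is \<open>F (Suc i)\<close>-measurable and predicted from \<open>F i\<close>.\<close>
definition visit :: "nat \<Rightarrow> 'w \<Rightarrow> real" where
  "visit i = indicator {v \<in> space M. X (Suc i) v = x}"

definition visit_prob :: "nat \<Rightarrow> 'w \<Rightarrow> real" where
  "visit_prob i = real_cond_exp M (F i) (visit i)"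

text \<open>A version of \<open>visit_prob\<close> that lies in \<open>[0, 1]\<close> everywhere, not only almost everywhere.\<close>
definition visit_prob_clipped :: "nat \<Rightarrow> 'w \<Rightarrow> real" where
  "visit_prob_clipped i w = max 0 (min 1 (visit_prob i w))"

lemma space_F: "space (F n) = space M"
  using sigma_finite_subalgebra.subalg[OF sigma_finite_F] unfolding subalgebra_def by auto

lemma borel_measurable_F_mono:
  "f \<in> borel_measurable (F m) \<Longrightarrow> m \<le> n \<Longrightarrow> f \<in> borel_measurable (F n)"
  by (rule measurable_from_subalg[of "F n" "F m"]) (auto simp: subalgebra_def space_F sets_F_mono)

lemma borel_measurable_F_imp_M: "f \<in> borel_measurable (F n) \<Longrightarrow> f \<in> borel_measurable M"
  using measurable_from_subalg sigma_finite_subalgebra.subalg[OF sigma_finite_F] by blast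

lemma integrable_bounded:
  fixes f :: "'w \<Rightarrow> real"
  shows "f \<in> borel_measurable M \<Longrightarrow> (\<And>w. \<bar>f w\<bar> \<le> K) \<Longrightarrow> integrable M f"
  by (rule integrable_const_bound[where B = K]) auto

lemma visit_measurable_F: "visit i \<in> borel_measurable (F (Suc i))"
proof -
  have "{v \<in> space M. X (Suc i) v = x} = X (Suc i) -` {x} \<inter> space (F (Suc i))"
    by (auto simp: space_F)
  also have "\<dots> \<in> sets (F (Suc i))"
    using X_measurable[of "Suc i"] singleton_sets by (auto intro: measurable_sets)
  finally show ?thesis unfolding visit_def by (rule borel_measurable_indicator)
qed

lemma visit_measurable [measurable]: "visit i \<in> borel_measurable M"
  by (rule borel_measurable_F_imp_M[OF visit_measurable_F])

lemma visit_cases: "visit i w = 0 \<or> visit i w = 1"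
  unfolding visit_def by (auto simp: indicator_def)

lemma visit_nonneg: "0 \<le> visit i w" and visit_le_one: "visit i w \<le> 1"
  using visit_cases[of i w] by auto

lemma visit_prob_clipped_measurable_F: "visit_prob_clipped i \<in> borel_measurable (F i)"
  unfolding visit_prob_clipped_def visit_prob_def by measurable

lemma visit_prob_clipped_measurable [measurable]: "visit_prob_clipped i \<in> borel_measurable M"
  by (rule borel_measurable_F_imp_M[OF visit_prob_clipped_measurable_F])

lemma visit_prob_clipped_nonneg: "0 \<le> visit_prob_clipped i w"
  and visit_prob_clipped_le_one: "visit_prob_clipped i w \<le> 1"
  unfolding visit_prob_clipped_def by auto

lemma AE_visit_prob_eq_clipped: "AE w in M. visit_prob i w = visit_prob_clipped i w"
proof -
  interpret sigma_finite_subalgebra M "F i" by (rule sigma_finite_F)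
  have "integrable M (visit i)"
    by (rule integrable_bounded[where K = 1]) (simp_all add: abs_of_nonneg visit_nonneg visit_le_one)
  then have "AE w in M. 0 \<le> visit_prob i w" "AE w in M. visit_prob i w \<le> 1"
    unfolding visit_prob_def
    by (auto intro!: real_cond_exp_ge_c real_cond_exp_le_c simp: visit_nonneg visit_le_one)
  then show ?thesis by eventually_elim (auto simp: visit_prob_clipped_def)
qed

lemma integral_mult_visit:
  assumes h: "h \<in> borel_measurable (F i)" and bounded: "\<And>w. \<bar>h w\<bar> \<le> K"
  shows "(\<integral>w. h w * visit i w \<partial>M) = (\<integral>w. h w * visit_prob_clipped i w \<partial>M)"
proof -
  interpret sigma_finite_subalgebra M "F i" by (rule sigma_finite_F)
  have [measurable]: "h \<in> borel_measurable M" by (rule borel_measurable_F_imp_M[OF h])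
  have [measurable]: "visit_prob i \<in> borel_measurable M"
    unfolding visit_prob_def by (rule borel_measurable_F_imp_M) measurable
  have "integrable M (\<lambda>w. h w * visit i w)"
    by (rule integrable_bounded[where K = K])
      (simp_all add: abs_mult_le_if_unit_interval bounded visit_nonneg visit_le_one)
  then have "(\<integral>w. h w * visit i w \<partial>M) = (\<integral>w. h w * visit_prob i w \<partial>M)"
    unfolding visit_prob_def using real_cond_exp_intg(2)[OF _ h visit_measurable] by simp
  also have "\<dots> = (\<integral>w. h w * visit_prob_clipped i w \<partial>M)"
    by (rule integral_cong_AE) (auto intro!: eventually_mono[OF AE_visit_prob_eq_clipped])
  finally show ?thesis .
qed

text \<open>Since the conditional mean of \<open>visit_factor c i\<close> given \<open>F i\<close> is
  \<open>(1 - c * r) * exp (c * r) \<le> 1\<close> with \<open>r = visit_prob_clipped i\<close>, the partial products of these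
  factors form a nonnegative supermartingale.\<close>
definition visit_factor :: "real \<Rightarrow> nat \<Rightarrow> 'w \<Rightarrow> real" where
  "visit_factor c i w = (1 - c * visit i w) * exp (c * visit_prob_clipped i w)"

lemma visit_factor_measurable_F: "visit_factor c i \<in> borel_measurable (F (Suc i))"
proof -
  have [measurable]: "visit i \<in> borel_measurable (F (Suc i))" by (rule visit_measurable_F)
  have [measurable]: "visit_prob_clipped i \<in> borel_measurable (F (Suc i))"
    by (rule borel_measurable_F_mono[OF visit_prob_clipped_measurable_F]) simp
  show ?thesis unfolding visit_factor_def by measurable
qed

lemma visit_factor_nonneg: "0 < c \<Longrightarrow> c < 1 \<Longrightarrow> 0 \<le> visit_factor c i w"
  using visit_cases[of i w] by (auto simp: visit_factor_def)

lemma visit_factor_le_exp: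
  assumes "0 < c"
  shows "visit_factor c i w \<le> exp c"
proof -
  have bound: "exp (c * visit_prob_clipped i w) \<le> exp c"
    using assms visit_prob_clipped_le_one by (simp add: mult_left_le)
  have "(1 - c * visit i w) * exp (c * visit_prob_clipped i w) \<le> 1 * exp (c * visit_prob_clipped i w)"
    using assms visit_nonneg[of i w] by (intro mult_right_mono) auto
  then show ?thesis unfolding visit_factor_def using bound by linarith
qed

lemma visit_factor_eq_exp:
  "0 < c \<Longrightarrow> c < 1 \<Longrightarrow>
     visit_factor c i w = exp (ln (1 - c) * visit i w + c * visit_prob_clipped i w)"
  using visit_cases[of i w] by (auto simp: visit_factor_def exp_add)

lemma integral_mult_visit_factor_le:
  assumes c: "0 < c" "c < 1"
    and g: "g \<in> borel_measurable (F n)" "\<And>w. 0 \<le> g w" "\<And>w. g w \<le> K"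
  shows "(\<integral>w. g w * visit_factor c n w \<partial>M) \<le> (\<integral>w. g w \<partial>M)"
proof -
  define r where "r = visit_prob_clipped n"
  define h where "h w = g w * exp (c * r w)" for w
  have [measurable]: "r \<in> borel_measurable (F n)" unfolding r_def by (rule visit_prob_clipped_measurable_F)
  have h_F [measurable]: "h \<in> borel_measurable (F n)" unfolding h_def using g(1) by measurable
  have [measurable]: "h \<in> borel_measurable M" "g \<in> borel_measurable M"
    using borel_measurable_F_imp_M h_F g(1) by blast+
  have h_bounded: "\<bar>h w\<bar> \<le> K * exp c" for w
  proof -
    have "exp (c * r w) \<le> exp c" using c visit_prob_clipped_le_one by (simp add: r_def mult_left_le)
    then show ?thesis unfolding h_def using g(2,3)[of w] by (simp add: abs_mult mult_mono)
  qed
  have int_h: "integrable M h" by (rule integrable_bounded[OF _ h_bounded]) simp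
  have bounded_by_h: "\<bar>h w * f w\<bar> \<le> K * exp c" if "0 \<le> f w" "f w \<le> 1" for f w
    using h_bounded that by (rule abs_mult_le_if_unit_interval)
  have int_hv: "integrable M (\<lambda>w. h w * visit n w)"
    by (rule integrable_bounded[OF _ bounded_by_h]) (simp_all add: visit_nonneg visit_le_one)
  have int_hr: "integrable M (\<lambda>w. h w * r w)"
    by (rule integrable_bounded[OF _ bounded_by_h])
      (simp_all add: r_def visit_prob_clipped_nonneg visit_prob_clipped_le_one)
  have "(\<integral>w. g w * visit_factor c n w \<partial>M) = (\<integral>w. h w - c * (h w * visit n w) \<partial>M)"
    by (simp add: visit_factor_def h_def r_def algebra_simps)
  also have "\<dots> = (\<integral>w. h w \<partial>M) - c * (\<integral>w. h w * r w \<partial>M)"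
    using int_h int_hv integral_mult_visit[OF h_F h_bounded] by (simp add: r_def)
  also have "\<dots> = (\<integral>w. h w * (1 - c * r w) \<partial>M)"
    using int_h int_hr by (simp add: algebra_simps)
  also have "\<dots> \<le> (\<integral>w. g w \<partial>M)"
  proof (rule integral_mono)
    show "integrable M (\<lambda>w. h w * (1 - c * r w))"
      using int_h int_hr by (simp add: algebra_simps)
    show "integrable M g" by (rule integrable_bounded[where K = K]) (use g in auto)
    fix w
    have "exp (c * r w) * (1 - c * r w) \<le> exp (c * r w) * exp (- (c * r w))"
      using exp_ge_add_one_self[of "- (c * r w)"] by (intro mult_left_mono) auto
    then have "exp (c * r w) * (1 - c * r w) \<le> 1" by (simp add: exp_minus)
    then show "h w * (1 - c * r w) \<le> g w"
      unfolding h_def using g(2)[of w] mult_left_mono[of _ 1 "g w"] by (simp add: mult.assoc)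
  qed
  finally show ?thesis .
qed

lemma stopped_prod_visit_factor_measurable_F:
  "stopped_prod C (visit_factor c) n \<in> borel_measurable (F n)"
proof (induction n)
  case (Suc n)
  have [measurable]: "stopped_prod C (visit_factor c) n \<in> borel_measurable (F (Suc n))"
    by (rule borel_measurable_F_mono[OF Suc.IH]) simp
  have [measurable]: "visit_factor c n \<in> borel_measurable (F (Suc n))"
    by (rule visit_factor_measurable_F)
  show ?case by (simp only: stopped_prod.simps) measurable
qed simp

lemma stopped_prod_visit_factor_measurable [measurable]:
  "stopped_prod C (visit_factor c) n \<in> borel_measurable M"
  by (rule borel_measurable_F_imp_M[OF stopped_prod_visit_factor_measurable_F])

lemma stopped_prod_visit_factor_bounds:
  assumes "0 < c" "c < 1"
  shows "0 \<le> stopped_prod C (visit_factor c) n w \<and> stopped_prod C (visit_factor c) n w \<le> exp c ^ n"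
proof (induction n)
  case (Suc n)
  have "stopped_prod C (visit_factor c) n w * visit_factor c n w \<le> exp c ^ n * exp c"
    using Suc visit_factor_nonneg[OF assms] visit_factor_le_exp[OF assms(1)] by (intro mult_mono) auto
  moreover have "exp c ^ n \<le> exp c * exp c ^ n" using assms by simp
  ultimately show ?case
    using Suc visit_factor_nonneg[OF assms, of n w] by (auto simp: mult.commute intro: order.trans)
qed simp

lemma integral_stopped_prod_visit_factor_le_one:
  assumes c: "0 < c" "c < 1"
  shows "(\<integral>w. stopped_prod C (visit_factor c) n w \<partial>M) \<le> 1"
proof (induction n)
  case (Suc n)
  define V where "V = stopped_prod C (visit_factor c) n"
  define g where "g w = (if C \<le> V w then 0 else V w)" for w
  have V_bounds: "0 \<le> V w" "V w \<le> exp c ^ n" for w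
    using stopped_prod_visit_factor_bounds[OF c] by (auto simp: V_def)
  have [measurable]: "V \<in> borel_measurable (F n)"
    unfolding V_def by (rule stopped_prod_visit_factor_measurable_F)
  have g_F [measurable]: "g \<in> borel_measurable (F n)" unfolding g_def by measurable
  have [measurable]: "g \<in> borel_measurable M" by (rule borel_measurable_F_imp_M[OF g_F])
  have [measurable]: "V \<in> borel_measurable M" unfolding V_def by measurable
  have g_bounds: "0 \<le> g w" "g w \<le> exp c ^ n" for w
    using V_bounds[of w] by (auto simp: g_def)
  have int_V: "integrable M V" by (rule integrable_bounded[where K = "exp c ^ n"]) (simp_all add: V_bounds)
  have int_g: "integrable M g" by (rule integrable_bounded[where K = "exp c ^ n"]) (simp_all add: g_bounds)
  have "\<bar>g w * visit_factor c n w\<bar> \<le> exp c ^ n * exp c" for w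
    using g_bounds[of w] visit_factor_nonneg[OF c, of n w] visit_factor_le_exp[OF c(1), of n w]
    by (simp add: abs_mult mult_mono)
  moreover have [measurable]: "visit_factor c n \<in> borel_measurable M"
    by (rule borel_measurable_F_imp_M[OF visit_factor_measurable_F])
  ultimately have int_gf: "integrable M (\<lambda>w. g w * visit_factor c n w)"
    by (intro integrable_bounded) simp_all
  have "(\<integral>w. stopped_prod C (visit_factor c) (Suc n) w \<partial>M)
      = (\<integral>w. (V w - g w) + g w * visit_factor c n w \<partial>M)"
    by (intro arg_cong[where f = "integral\<^sup>L M"] ext) (simp add: V_def g_def)
  also have "\<dots> = (\<integral>w. V w - g w \<partial>M) + (\<integral>w. g w * visit_factor c n w \<partial>M)"
    using int_V int_g int_gf by simp
  also have "\<dots> \<le> (\<integral>w. V w - g w \<partial>M) + (\<integral>w. g w \<partial>M)"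
    using integral_mult_visit_factor_le[OF c g_F g_bounds] by simp
  also have "\<dots> = (\<integral>w. V w \<partial>M)" using int_V int_g by simp
  also have "\<dots> \<le> 1" using Suc.IH by (simp add: V_def)
  finally show ?case .
qed simp

lemma prob_prod_visit_factor_reaches_le:
  assumes c: "0 < c" "c < 1" and "0 < C"
  shows "prob (\<Union>n. {w \<in> space M. C \<le> stopped_prod C (visit_factor c) n w}) \<le> 1 / C"
proof -
  define S where "S n = {w \<in> space M. C \<le> stopped_prod C (visit_factor c) n w}" for n
  have "prob (S n) \<le> 1 / C" for n
  proof -
    have "prob (S n) \<le> (\<integral>w. stopped_prod C (visit_factor c) n w \<partial>M) / C"
      unfolding S_def using stopped_prod_visit_factor_bounds[OF c] \<open>0 < C\<close>
      by (intro integral_Markov_inequality_measure[where A = "space M"] integrable_bounded) auto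
    also have "\<dots> \<le> 1 / C"
      using integral_stopped_prod_visit_factor_le_one[OF c] \<open>0 < C\<close> by (simp add: divide_right_mono)
    finally show ?thesis .
  qed
  moreover have "incseq S"
    by (rule incseq_SucI) (auto simp: S_def intro: stopped_prod_ge_mono)
  then have "(\<lambda>n. prob (S n)) \<longlonglongrightarrow> prob (\<Union>n. S n)"
    by (rule finite_Lim_measure_incseq[rotated]) (auto simp: S_def)
  ultimately show ?thesis unfolding S_def by (intro LIMSEQ_le_const2) auto
qed

lemma AE_prod_visit_factor_bounded:
  assumes c: "0 < c" "c < 1"
  shows "AE w in M. \<exists>C. \<forall>t. (\<Prod>i<t. visit_factor c i w) < C"
proof (rule AE_I')
  define U where "U m = (\<Union>n. {w \<in> space M. real (Suc m) \<le> stopped_prod (real (Suc m)) (visit_factor c) n w})" for m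
  have U_sets: "U m \<in> sets M" for m unfolding U_def by measurable
  have "prob (\<Inter>m. U m) \<le> inverse (real (Suc m))" for m
  proof -
    have "prob (\<Inter>m. U m) \<le> prob (U m)" using U_sets by (intro finite_measure_mono) auto
    also have "\<dots> \<le> inverse (real (Suc m))"
      unfolding U_def using prob_prod_visit_factor_reaches_le[OF c] by (simp add: inverse_eq_divide)
    finally show ?thesis .
  qed
  then have "prob (\<Inter>m. U m) \<le> 0" by (intro LIMSEQ_le_const[OF LIMSEQ_inverse_real_of_nat]) auto
  then have "prob (\<Inter>m. U m) = 0" by (intro order.antisym measure_nonneg)
  then show "(\<Inter>m. U m) \<in> null_sets M"
    using U_sets by (auto simp: emeasure_eq_measure null_sets_def)
  show "{w \<in> space M. \<not> (\<exists>C. \<forall>t. (\<Prod>i<t. visit_factor c i w) < C)} \<subseteq> (\<Inter>m. U m)"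
  proof (intro subsetI INT_I)
    fix w m assume "w \<in> {w \<in> space M. \<not> (\<exists>C. \<forall>t. (\<Prod>i<t. visit_factor c i w) < C)}"
    then obtain t where "w \<in> space M" "real (Suc m) \<le> (\<Prod>i<t. visit_factor c i w)" by (auto simp: not_less)
    then show "w \<in> U m" unfolding U_def by (auto intro: stopped_prod_ge_if_prod_ge)
  qed
qed

lemma AE_visits_ge_linear_fixed:
  assumes c: "0 < c" "c < 1"
  shows "AE w in M. \<exists>K. \<forall>t. (1 - c) * (\<Sum>i<t. visit_prob_clipped i w) - K \<le> (\<Sum>i<t. visit i w)"
  using AE_prod_visit_factor_bounded[OF c]
proof eventually_elim
  case (elim w)
  then obtain C where C: "\<And>t. (\<Prod>i<t. visit_factor c i w) < C" by blast
  have "0 < C" using C[of 0] by simp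
  have "(1 - c) * (\<Sum>i<t. visit_prob_clipped i w) - (1 - c) / c * ln C \<le> (\<Sum>i<t. visit i w)" for t
  proof -
    define N where "N = (\<Sum>i<t. visit i w)"
    define A where "A = (\<Sum>i<t. visit_prob_clipped i w)"
    have "0 \<le> N" unfolding N_def by (simp add: sum_nonneg visit_nonneg)
    have "exp (ln (1 - c) * N + c * A) < C"
      using C[of t] c by (simp add: N_def A_def visit_factor_eq_exp exp_sum[symmetric] sum.distrib sum_distrib_left)
    then have "ln (1 - c) * N + c * A < ln C" using \<open>0 < C\<close> by (metis exp_less_cancel_iff exp_ln)
    moreover have "- ln (1 - c) * N \<le> c / (1 - c) * N"
      using minus_ln_one_minus_le[OF c] \<open>0 \<le> N\<close> by (rule mult_right_mono)
    ultimately have "c * A - c / (1 - c) * N < ln C" by simp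
    then have "(1 - c) / c * (c * A - c / (1 - c) * N) \<le> (1 - c) / c * ln C"
      using c by (intro mult_left_mono) auto
    moreover have "(1 - c) / c * (c * A - c / (1 - c) * N) = (1 - c) * A - N"
      using c by (simp add: field_simps)
    ultimately show ?thesis unfolding N_def A_def by linarith
  qed
  then show ?case by blast
qed

lemma AE_visits_ge_linear:
  "AE w in M. \<forall>\<delta>>0. \<exists>K. \<forall>t. (1 - \<delta>) * (\<Sum>i<t. visit_prob_clipped i w) - K \<le> (\<Sum>i<t. visit i w)"
proof -
  have "AE w in M. \<forall>m::nat. \<exists>K. \<forall>t.
      (1 - 1 / (real m + 2)) * (\<Sum>i<t. visit_prob_clipped i w) - K \<le> (\<Sum>i<t. visit i w)"
    unfolding AE_all_countable by (intro allI AE_visits_ge_linear_fixed) auto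
  then show ?thesis
  proof eventually_elim
    case (elim w)
    show ?case
    proof (intro allI impI)
      fix \<delta> :: real assume "0 < \<delta>"
      then obtain m where "0 < m" "inverse (real m) < \<delta>" using ex_inverse_of_nat_less by blast
      then have "1 / (real m + 2) \<le> \<delta>"
        using \<open>0 < \<delta>\<close> by (auto simp: inverse_eq_divide field_simps)
      then have "(1 - \<delta>) * (\<Sum>i<t. visit_prob_clipped i w)
          \<le> (1 - 1 / (real m + 2)) * (\<Sum>i<t. visit_prob_clipped i w)" for t
        by (intro mult_right_mono) (auto simp: sum_nonneg visit_prob_clipped_nonneg)
      with elim[rule_format, of m] show "\<exists>K. \<forall>t. (1 - \<delta>) * (\<Sum>i<t. visit_prob_clipped i w) - K
          \<le> (\<Sum>i<t. visit i w)"
        by (meson diff_right_mono order.trans)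
    qed
  qed
qed

lemma AE_limsup_mult_post_var:
  fixes k :: "'x \<Rightarrow> 'x \<Rightarrow> real" and B :: "nat \<Rightarrow> real"
  assumes psd: "psd_kernel k" and "0 < s" and B_pos: "\<And>T. 0 < B T"
    and B_le: "AE w in M. \<forall>T\<ge>T0. B T \<le> (\<Sum>i<T. visit_prob i w)"
  shows "AE w in M. limsup (\<lambda>t. ereal (B t * post_var k s (\<lambda>i. X (Suc i) w) t x)) < \<infinity>
    \<and> (filterlim B at_top sequentially \<longrightarrow>
        limsup (\<lambda>t. ereal (B t * post_var k s (\<lambda>i. X (Suc i) w) t x)) \<le> ereal s)"
proof -
  have "AE w in M. \<forall>i. visit_prob i w = visit_prob_clipped i w"
    by (simp add: AE_all_countable AE_visit_prob_eq_clipped)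
  from this AE_visits_ge_linear B_le AE_space show ?thesis
  proof eventually_elim
    case (elim w)
    define A where "A t = (\<Sum>i<t. visit_prob_clipped i w)" for t
    define N where "N t = (\<Sum>i<t. visit i w)" for t
    define \<sigma> where "\<sigma> t = post_var k s (\<lambda>i. X (Suc i) w) t x" for t
    have mono: "incseq A" unfolding A_def by (intro incseq_SucI) (simp add: visit_prob_clipped_nonneg)
    have B_le_A: "B t \<le> A t" if "T0 \<le> t" for t using elim(1,3) that by (simp add: A_def)
    have \<sigma>_le_diag: "\<sigma> t \<le> k x x" for t unfolding \<sigma>_def by (rule post_var_le_diag[OF psd \<open>0 < s\<close>])
    have \<sigma>_le: "\<sigma> t \<le> s / N t" if "0 < N t" for t
      unfolding \<sigma>_def using elim(4) that
      by (intro post_var_le_noise_div_visits[OF psd \<open>0 < s\<close>]) (simp_all add: N_def visit_def indicator_def)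
    have lower: "\<exists>K. \<forall>t. (1 - \<delta>) * A t - K \<le> N t" if "0 < \<delta>" for \<delta>
      using elim(2) that by (simp add: A_def N_def)
    obtain K where "\<And>t. (1 - 1 / 4) * A t - K \<le> N t" using lower[of "1 / 4"] by auto
    from limsup_mult_finite_of_linear_lower_bound[OF mono B_le_A B_pos \<sigma>_le_diag
        psd_kernel_diag_nonneg[OF psd] \<sigma>_le _ _ _ this]
      limsup_mult_le_of_linear_lower_bounds[OF mono _ B_le_A B_pos \<sigma>_le \<open>0 < s\<close> lower]
    show ?case using \<open>0 < s\<close> unfolding \<sigma>_def by simp
  qed
qed

end

theorem mainTheorem5:
  fixes M :: "'w measure" and F :: "nat \<Rightarrow> 'w measure"
    and SX :: "'x measure" and X :: "nat \<Rightarrow> 'w \<Rightarrow> 'x"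
    and k :: "'x \<Rightarrow> 'x \<Rightarrow> real" and s2 :: real and x :: 'x
    and B :: "nat \<Rightarrow> real" and Tstar :: nat
  assumes "prob_space M"
    and "\<And>n. sigma_finite_subalgebra M (F n)"
    and "\<And>n m. n \<le> m \<Longrightarrow> sets (F n) \<subseteq> sets (F m)"
    and "\<And>t. t \<ge> 1 \<Longrightarrow> X t \<in> measurable (F t) SX"
    and "{x} \<in> sets SX"
    and "psd_kernel k" and "bounded_kernel k"
    and "s2 > 0"
    and "\<And>T. B T > 0"
    and "AE w in M. \<forall>T\<ge>Tstar.
           (\<Sum>t=1..T. real_cond_exp M (F (t - 1))
                (indicator {v \<in> space M. X t v = x}) w) \<ge> B T"
  shows "(AE w in M. limsup (\<lambda>t. ereal (B t * post_var k s2 (\<lambda>i. X (Suc i) w) t x)) < \<infinity>)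
       \<and> (filterlim B at_top sequentially \<longrightarrow>
          (AE w in M. limsup (\<lambda>t. ereal (B t * post_var k s2 (\<lambda>i. X (Suc i) w) t x)) \<le> ereal s2))"
proof -
  interpret visit_process M F SX X x
    using assms(1-5) by (simp add: visit_process_def visit_process_axioms_def)
  have "AE w in M. \<forall>T\<ge>Tstar. B T \<le> (\<Sum>i<T. visit_prob i w)"
    using assms(10) by (simp add: visit_prob_def visit_def sum.atLeast1_atMost_eq)
  from AE_limsup_mult_post_var[OF assms(6,8,9) this] show ?thesis
    by (auto elim: AE_mp intro: AE_I2)
qed

end
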